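(* Let $R=\mathbb{C}[\alpha,\beta,\gamma,\delta]$ and let $G_0,\dots,G_b$ be a basis of a subspace $V_b\subseteq\mathbb{C}[s,t]_d$. Let $\mathcal{M}$ be the $(b+1)\times(d+1)$ matrix over $R$ whose $i$-th row consists of the coefficients, with respect to the monomials $s^d,s^{d-1}t,\dots,t^d$, of $G_i(\alpha s+\beta t,\gamma s+\delta t)$, and let $M\subseteq R(d)^{b+1}$ be the graded submodule generated by the columns of $\mathcal{M}$. Let $\mathrm{PGL}(2,\mathbb{C})$ act on $\mathbb{P}^3$ from the right by $\begin{pmatrix}\alpha&\beta\\\gamma&\delta\end{pmatrix}\mapsto\begin{pmatrix}\alpha&\beta\\\gamma&\delta\end{pmatrix}\cdot\sigma$, and consider the induced action on $R(d)^{b+1}$ (by the corresponding linear substitution of the variables $\alpha,\beta,\gamma,\delta$ in each coordinate). Then this right action preserves the submodule $M$.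
   Context: Points of $\mathbb{P}^3$ with coordinates $(\alpha:\beta:\gamma:\delta)$ are identified with classes of $2\times 2$ matrices $\begin{pmatrix}\alpha&\beta\\\gamma&\delta\end{pmatrix}$. $R(d)$ denotes $R$ with grading shifted by $d$. *)

theory Defs
  imports "HOL-Analysis.Analysis" "HOL-Computational_Algebra.Polynomial"
begin

text \<open>Points (alpha:beta:gamma:delta) are 2x2 matrices A with A$1$1 = alpha, A$1$2 = beta,
  A$2$1 = gamma, A$2$2 = delta.  The ring R = C[alpha,beta,gamma,delta] is modelled by the
  ring of polynomial functions on 2x2 complex matrices (isomorphic to R since C is infinite).\<close>

inductive_set polyfun :: "(complex^2^2 \<Rightarrow> complex) set" where
  pf_const: "(\<lambda>A. c) \<in> polyfun"
| pf_var: "(\<lambda>A. A $ i $ j) \<in> polyfun"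
| pf_add: "f \<in> polyfun \<Longrightarrow> g \<in> polyfun \<Longrightarrow> (\<lambda>A. f A + g A) \<in> polyfun"
| pf_mult: "f \<in> polyfun \<Longrightarrow> g \<in> polyfun \<Longrightarrow> (\<lambda>A. f A * g A) \<in> polyfun"

text \<open>A binary form G of degree d is given by coefficients: G(s,t) = sum_{j<=d} c j s^(d-j) t^j.
  The coefficient of s^(d-k) t^k in G(alpha s + beta t, gamma s + delta t) is computed after
  dehomogenising (s = 1), which is exact because the substituted form is homogeneous of degree d.\<close>

definition subst_coeff :: "(nat \<Rightarrow> complex) \<Rightarrow> nat \<Rightarrow> nat \<Rightarrow> complex^2^2 \<Rightarrow> complex" where
  "subst_coeff c d k A =
     coeff (\<Sum>j\<le>d. smult (c j) ([:A$1$1, A$1$2:] ^ (d - j) * [:A$2$1, A$2$2:] ^ j)) k"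

definition Mmat :: "(nat \<Rightarrow> nat \<Rightarrow> complex) \<Rightarrow> nat \<Rightarrow> nat \<Rightarrow> nat \<Rightarrow> complex^2^2 \<Rightarrow> complex" where
  "Mmat G d i k = subst_coeff (G i) d k"

definition colmodule :: "(nat \<Rightarrow> nat \<Rightarrow> complex) \<Rightarrow> nat \<Rightarrow> nat \<Rightarrow> (nat \<Rightarrow> complex^2^2 \<Rightarrow> complex) set" where
  "colmodule G b d = {v. \<exists>r. (\<forall>k\<le>d. r k \<in> polyfun) \<and>
       (\<forall>i\<le>b. v i = (\<lambda>A. \<Sum>k\<le>d. r k A * Mmat G d i k A))}"

definition right_act :: "complex^2^2 \<Rightarrow> (nat \<Rightarrow> complex^2^2 \<Rightarrow> complex) \<Rightarrow> (nat \<Rightarrow> complex^2^2 \<Rightarrow> complex)" where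
  "right_act \<sigma> v = (\<lambda>i A. v i (A ** \<sigma>))"

end

theory Submission
  imports Defs
begin

text \<open>Write \<open>u = \<sigma>\<^sub>1\<^sub>1 + \<sigma>\<^sub>1\<^sub>2 t\<close> and \<open>w = \<sigma>\<^sub>2\<^sub>1 + \<sigma>\<^sub>2\<^sub>2 t\<close>.  Substituting \<open>A \<sigma>\<close> for \<open>A\<close> in
  \<open>G(\<alpha> + \<beta> t, \<gamma> + \<delta> t)\<close> replaces \<open>\<alpha> + \<beta> t\<close> by \<open>\<alpha> u + \<beta> w\<close> and \<open>\<gamma> + \<delta> t\<close> by \<open>\<gamma> u + \<delta> w\<close>, so the
  result is the degree-\<open>d\<close> homogenisation of \<open>G(\<alpha> + \<beta> t, \<gamma> + \<delta> t)\<close> evaluated at \<open>(u, w)\<close>.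
  Hence every coefficient of the substituted form is a fixed \<open>\<complex>\<close>-linear combination of the
  original coefficients, i.e. the substituted matrix is \<open>\<M> C\<close> for a constant matrix \<open>C\<close>
  depending only on \<open>\<sigma>\<close>, and its column module is contained in that of \<open>\<M>\<close>.\<close>

definition homog_eval :: "nat \<Rightarrow> 'a::comm_ring_1 poly \<Rightarrow> 'a poly \<Rightarrow> 'a poly \<Rightarrow> 'a poly" where
  "homog_eval n q u w = (\<Sum>l\<le>n. smult (coeff q l) (u ^ (n - l) * w ^ l))"

lemma homog_eval_add: "homog_eval n (p + q) u w = homog_eval n p u w + homog_eval n q u w"
  by (simp add: homog_eval_def sum.distrib smult_add_left)

lemma homog_eval_smult: "homog_eval n (smult a p) u w = smult a (homog_eval n p u w)"
  by (simp add: homog_eval_def sum_distrib_left[of "[:a:]", simplified])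

lemma homog_eval_zero [simp]: "homog_eval n 0 u w = 0"
  by (simp add: homog_eval_def)

lemma homog_eval_sum: "homog_eval n (\<Sum>j\<in>S. f j) u w = (\<Sum>j\<in>S. homog_eval n (f j) u w)"
  by (induction S rule: infinite_finite_induct) (auto simp: homog_eval_add)

lemma homog_eval_const: "homog_eval n [:a:] u w = smult a (u ^ n)"
  by (simp add: homog_eval_def sum.atMost_shift)

lemma homog_eval_linear: "homog_eval 1 [:a, b:] u w = smult a u + smult b w"
  by (simp add: homog_eval_def)

lemma homog_eval_Suc_degree:
  assumes "degree q \<le> n"
  shows "homog_eval (Suc n) q u w = u * homog_eval n q u w"
proof -
  have "coeff q (Suc n) = 0"
    using assms by (simp add: coeff_eq_0)
  then have "homog_eval (Suc n) q u w = (\<Sum>l\<le>n. smult (coeff q l) (u ^ (Suc n - l) * w ^ l))"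
    by (simp add: homog_eval_def)
  also have "\<dots> = (\<Sum>l\<le>n. u * smult (coeff q l) (u ^ (n - l) * w ^ l))"
    by (intro sum.cong refl) (simp add: Suc_diff_le mult.assoc)
  finally show ?thesis
    by (simp add: homog_eval_def sum_distrib_left)
qed

lemma homog_eval_add_degree:
  "degree q \<le> n \<Longrightarrow> homog_eval (n + m) q u w = u ^ m * homog_eval n q u w"
  by (induction m) (auto simp: homog_eval_Suc_degree mult.assoc)

lemma homog_eval_pCons_0: "homog_eval (Suc n) (pCons 0 q) u w = w * homog_eval n q u w"
proof -
  have "homog_eval (Suc n) (pCons 0 q) u w = (\<Sum>l\<le>n. w * smult (coeff q l) (u ^ (n - l) * w ^ l))"
    unfolding homog_eval_def sum.atMost_Suc_shift
    by (simp add: mult.left_commute)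
  then show ?thesis
    by (simp add: homog_eval_def sum_distrib_left)
qed

lemma homog_eval_mult:
  "degree p \<le> m \<Longrightarrow> degree q \<le> n \<Longrightarrow>
    homog_eval (m + n) (p * q) u w = homog_eval m p u w * homog_eval n q u w"
proof (induction p arbitrary: m rule: pCons_induct)
  case 0
  then show ?case by (simp add: homog_eval_def)
next
  case (pCons a p)
  show ?case
  proof (cases m)
    case 0
    with pCons have "p = 0" by (auto split: if_splits)
    with 0 show ?thesis by (simp add: homog_eval_smult homog_eval_const)
  next
    case (Suc m')
    with pCons have "degree p \<le> m'" by (auto split: if_splits)
    have pCons_split: "pCons a p = [:a:] + pCons 0 p" and "pCons a p * q = smult a q + pCons 0 (p * q)"
      by simp_all
    then have "homog_eval (m + n) (pCons a p * q) u w
        = smult a (u ^ m * homog_eval n q u w) + w * (homog_eval m' p u w * homog_eval n q u w)"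
      using Suc pCons.IH[OF \<open>degree p \<le> m'\<close> pCons.prems(2)]
        homog_eval_add_degree[OF pCons.prems(2), of m]
      by (simp add: homog_eval_add homog_eval_smult homog_eval_pCons_0 add.commute)
    also have "\<dots> = homog_eval m (pCons a p) u w * homog_eval n q u w"
      unfolding pCons_split Suc homog_eval_add homog_eval_const homog_eval_pCons_0
      by (simp add: algebra_simps)
    finally show ?thesis .
  qed
qed

lemma degree_power_le_of_degree_le_1: "degree p \<le> 1 \<Longrightarrow> degree (p ^ k) \<le> k"
  using degree_power_le[of p k] mult_le_mono1[of "degree p" 1 k] by linarith

lemma homog_eval_power:
  assumes "degree p \<le> 1"
  shows "homog_eval k (p ^ k) u w = homog_eval 1 p u w ^ k"
proof (induction k)
  case 0
  then show ?case by (simp add: homog_eval_def)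
next
  case (Suc k)
  then show ?case
    using homog_eval_mult[OF assms degree_power_le_of_degree_le_1[OF assms], of k u w] by simp
qed

lemma homog_eval_linear_power_product:
  assumes "j \<le> d"
  shows "homog_eval d ([:a, b:] ^ (d - j) * [:c, e:] ^ j) u w
    = (smult a u + smult b w) ^ (d - j) * (smult c u + smult e w) ^ j"
proof -
  have "degree ([:a, b:] ^ (d - j)) \<le> d - j" "degree ([:c, e:] ^ j) \<le> j"
    by (simp_all add: degree_power_le_of_degree_le_1)
  from homog_eval_mult[OF this, of u w] assms show ?thesis
    by (simp add: homog_eval_power homog_eval_linear[unfolded One_nat_def])
qed

lemma matrix_mult_2_entry:
  "(A ** (B::'a::comm_ring_1^2^2)) $ i $ j = A $ i $ 1 * B $ 1 $ j + A $ i $ 2 * B $ 2 $ j"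
  by (simp add: matrix_matrix_mult_def sum_2)

lemma subst_coeff_matrix_mult:
  "subst_coeff c d k (A ** \<sigma>) =
    (\<Sum>l\<le>d. subst_coeff c d l A * coeff ([:\<sigma>$1$1, \<sigma>$1$2:] ^ (d - l) * [:\<sigma>$2$1, \<sigma>$2$2:] ^ l) k)"
proof -
  define u where "u = [:\<sigma>$1$1, \<sigma>$1$2:]"
  define w where "w = [:\<sigma>$2$1, \<sigma>$2$2:]"
  define P where "P B = (\<Sum>j\<le>d. smult (c j) ([:B$1$1, B$1$2:] ^ (d - j) * [:B$2$1, B$2$2:] ^ j))"
    for B :: "complex^2^2"
  have "[:(A ** \<sigma>)$i$1, (A ** \<sigma>)$i$2:] = smult (A$i$1) u + smult (A$i$2) w" for i
    by (simp add: matrix_mult_2_entry u_def w_def algebra_simps)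
  then have "P (A ** \<sigma>) = homog_eval d (P A) u w"
    unfolding P_def homog_eval_sum homog_eval_smult
    by (intro sum.cong refl) (simp add: homog_eval_linear_power_product)
  then show ?thesis
    by (simp add: subst_coeff_def P_def [symmetric] u_def w_def homog_eval_def coeff_sum)
qed

lemma polyfun_sum:
  "finite S \<Longrightarrow> (\<And>x. x \<in> S \<Longrightarrow> f x \<in> polyfun) \<Longrightarrow> (\<lambda>A. \<Sum>x\<in>S. f x A) \<in> polyfun"
  by (induction S rule: finite_induct) (auto intro: polyfun.intros)

lemma polyfun_comp_matrix_mult: "f \<in> polyfun \<Longrightarrow> (\<lambda>A. f (A ** \<sigma>)) \<in> polyfun"
proof (induction rule: polyfun.induct)
  case (pf_var i j)
  have "(\<lambda>A. \<Sum>k\<in>UNIV. A $ i $ k * \<sigma> $ k $ j) \<in> polyfun"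
    by (rule polyfun_sum) (auto intro: polyfun.intros)
  then show ?case by (simp add: matrix_matrix_mult_def)
qed (auto intro: polyfun.intros)

lemma colmodule_right_act:
  assumes Mmat: "\<And>i k A. i \<le> b \<Longrightarrow> Mmat G d i k (A ** \<sigma>) = (\<Sum>l\<le>d. Mmat G d i l A * C l k)"
    and v: "v \<in> colmodule G b d"
  shows "right_act \<sigma> v \<in> colmodule G b d"
proof -
  obtain r where r: "\<And>k. k \<le> d \<Longrightarrow> r k \<in> polyfun"
    and vi: "\<And>i. i \<le> b \<Longrightarrow> v i = (\<lambda>A. \<Sum>k\<le>d. r k A * Mmat G d i k A)"
    using v unfolding colmodule_def by blast
  define r' where "r' l = (\<lambda>A. \<Sum>k\<le>d. C l k * r k (A ** \<sigma>))" for l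
  have "r' l \<in> polyfun" for l
    unfolding r'_def
    by (intro polyfun_sum) (auto intro!: polyfun.intros polyfun_comp_matrix_mult r)
  moreover have "right_act \<sigma> v i = (\<lambda>A. \<Sum>l\<le>d. r' l A * Mmat G d i l A)" if "i \<le> b" for i
  proof
    fix A
    have "right_act \<sigma> v i A = (\<Sum>k\<le>d. \<Sum>l\<le>d. r k (A ** \<sigma>) * (Mmat G d i l A * C l k))"
      using that by (simp add: right_act_def vi Mmat sum_distrib_left)
    also have "\<dots> = (\<Sum>l\<le>d. \<Sum>k\<le>d. C l k * r k (A ** \<sigma>) * Mmat G d i l A)"
      by (subst sum.swap) (simp add: mult_ac)
    also have "\<dots> = (\<Sum>l\<le>d. r' l A * Mmat G d i l A)"
      by (simp add: r'_def sum_distrib_right)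
    finally show "right_act \<sigma> v i A = (\<Sum>l\<le>d. r' l A * Mmat G d i l A)" .
  qed
  ultimately show ?thesis
    unfolding colmodule_def by blast
qed

theorem lemma3p2:
  fixes G :: "nat \<Rightarrow> nat \<Rightarrow> complex" and b d :: nat and \<sigma> :: "complex^2^2"
  assumes basis: "\<forall>a :: nat \<Rightarrow> complex. (\<forall>k\<le>d. (\<Sum>i\<le>b. a i * G i k) = 0) \<longrightarrow> (\<forall>i\<le>b. a i = 0)"
    and inv: "invertible \<sigma>"
    and v: "v \<in> colmodule G b d"
  shows "right_act \<sigma> v \<in> colmodule G b d"
  using colmodule_right_act[OF _ v] subst_coeff_matrix_mult by (simp add: Mmat_def)

end
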